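(* Let $\mathbb{F}$ be a field with $\mathrm{char}(\mathbb{F})\neq 2$ and let $L$ be a finite-dimensional Lie algebra over $\mathbb{F}$. If $b(L)\leq 1$, then $L$ is solvable.
   Context: For $x\in L$, $b(x)=\mathrm{rank}(\mathrm{ad}_x)$ and the breadth of $L$ is $b(L)=\max\{b(x)\mid x\in L\}$. *)

theory Defs
  imports Complex_Main
begin

text \<open>A Lie algebra over the field 'k is modelled as the whole type 'v
  (an abelian group) with a scalar multiplication scale making it a vector
  space over 'k, and a bracket br that is bilinear, alternating and
  satisfies the Jacobi identity.\<close>

definition lie_algebra :: "('k::field \<Rightarrow> 'v::ab_group_add \<Rightarrow> 'v) \<Rightarrow> ('v \<Rightarrow> 'v \<Rightarrow> 'v) \<Rightarrow> bool" where
  "lie_algebra scale br \<longleftrightarrow>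
     vector_space scale \<and>
     (\<forall>x. Vector_Spaces.linear scale scale (br x)) \<and>
     (\<forall>y. Vector_Spaces.linear scale scale (\<lambda>x. br x y)) \<and>
     (\<forall>x. br x x = 0) \<and>
     (\<forall>x y z. br x (br y z) + br y (br z x) + br z (br x y) = 0)"

definition finite_dim :: "('k::field \<Rightarrow> 'v::ab_group_add \<Rightarrow> 'v) \<Rightarrow> bool" where
  "finite_dim scale \<longleftrightarrow> (\<exists>S. finite S \<and> module.span scale S = UNIV)"

definition elem_breadth :: "('k::field \<Rightarrow> 'v::ab_group_add \<Rightarrow> 'v) \<Rightarrow> ('v \<Rightarrow> 'v \<Rightarrow> 'v) \<Rightarrow> 'v \<Rightarrow> nat" where
  "elem_breadth scale br x = vector_space.dim scale (range (br x))"

definition breadth :: "('k::field \<Rightarrow> 'v::ab_group_add \<Rightarrow> 'v) \<Rightarrow> ('v \<Rightarrow> 'v \<Rightarrow> 'v) \<Rightarrow> nat" where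
  "breadth scale br = Max (range (elem_breadth scale br))"

primrec derived_series :: "('k::field \<Rightarrow> 'v::ab_group_add \<Rightarrow> 'v) \<Rightarrow> ('v \<Rightarrow> 'v \<Rightarrow> 'v) \<Rightarrow> nat \<Rightarrow> 'v set" where
  "derived_series scale br 0 = UNIV"
| "derived_series scale br (Suc n) =
     module.span scale {br x y | x y. x \<in> derived_series scale br n \<and> y \<in> derived_series scale br n}"

definition solvable_lie :: "('k::field \<Rightarrow> 'v::ab_group_add \<Rightarrow> 'v) \<Rightarrow> ('v \<Rightarrow> 'v \<Rightarrow> 'v) \<Rightarrow> bool" where
  "solvable_lie scale br \<longleftrightarrow> (\<exists>n. derived_series scale br n = {0})"

end

theory Submission
  imports Defs
begin

text \<open>If \<open>u = [x,y] \<noteq> 0\<close>, then \<open>u\<close> lies in both \<open>ad\<^sub>x(L)\<close> and \<open>ad\<^sub>y(L)\<close>, which have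
  rank at most one and are therefore spanned by \<open>u\<close>. The Jacobi identity
  \<open>[u,z] = [x,[y,z]] - [y,[x,z]]\<close> then gives \<open>ad\<^sub>u(L) \<subseteq> \<bbbF>u\<close>. For two commutators
  \<open>u\<close>, \<open>v\<close> this puts \<open>[u,v]\<close> in \<open>\<bbbF>u \<inter> \<bbbF>v\<close>, and \<open>[u,v] = a u\<close> with \<open>a \<noteq> 0\<close> would
  make \<open>u\<close> a multiple of \<open>v\<close>, forcing \<open>[u,v] = 0\<close>. So the derived algebra is abelian
  and \<open>L'' = 0\<close>.\<close>

lemma (in vector_space) finite_dim_basis_exists:
  assumes "finite_dim scale"
  obtains B where "finite_dimensional_vector_space scale B"
proof -
  obtain S where S: "finite S" "span S = UNIV"
    using assms unfolding finite_dim_def by blast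
  obtain B where B: "independent B" "UNIV \<subseteq> span B"
    using maximal_independent_subset[of UNIV] by blast
  have "finite B"
    using independent_span_bound[OF S(1) B(1)] S(2) by auto
  with B have "finite_dimensional_vector_space scale B"
    by unfold_locales auto
  then show ?thesis by (rule that)
qed

(* Finite dimensionality matters: dim is 0 for a space without a finite basis. *)
lemma (in finite_dimensional_vector_space) dim_le_1_subset_span_singleton:
  assumes "dim V \<le> 1" "u \<in> V" "u \<noteq> 0"
  shows "V \<subseteq> span {u}"
proof
  fix w assume "w \<in> V"
  show "w \<in> span {u}"
  proof (rule ccontr)
    assume w: "w \<notin> span {u}"
    then have "w \<noteq> u" using span_base by blast
    have "independent {u}"
      using \<open>u \<noteq> 0\<close> independent_insertI[of u "{}"] by simp
    with w have "independent {w, u}" by (rule independent_insertI)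
    then have "card {w, u} \<le> dim V"
      using independent_card_le_dim[of "{w, u}" V] \<open>w \<in> V\<close> \<open>u \<in> V\<close> by simp
    with \<open>w \<noteq> u\<close> \<open>dim V \<le> 1\<close> show False by simp
  qed
qed

lemma (in finite_dimensional_vector_space) elem_breadth_le_breadth:
  "elem_breadth scale br x \<le> breadth scale br"
proof -
  have "finite (range (elem_breadth scale br))"
    by (rule finite_subset[of _ "{..dimension}"]) (auto simp: elem_breadth_def dim_subset_UNIV)
  then show ?thesis unfolding breadth_def by (rule Max_ge) (rule rangeI)
qed

locale lie_alg =
  fixes scale :: "'k::field \<Rightarrow> 'v::ab_group_add \<Rightarrow> 'v"
    and br :: "'v \<Rightarrow> 'v \<Rightarrow> 'v"
  assumes lie_algebra: "lie_algebra scale br"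
begin

sublocale vector_space scale
  using lie_algebra unfolding lie_algebra_def by blast

lemma bracket_add_left: "br (x + y) z = br x z + br y z"
  and bracket_add_right: "br z (x + y) = br z x + br z y"
  and bracket_scale_left: "br (scale c x) z = scale c (br x z)"
  and bracket_scale_right: "br z (scale c x) = scale c (br z x)"
  and bracket_self: "br x x = 0"
  and jacobi: "br x (br y z) + br y (br z x) + br z (br x y) = 0"
  using lie_algebra unfolding lie_algebra_def Vector_Spaces.linear_iff by auto

lemma bracket_zero_left: "br 0 z = 0"
  using bracket_scale_left[of 0 0 z] by simp

lemma bracket_zero_right: "br z 0 = 0"
  using bracket_scale_right[of z 0 0] by simp

lemma bracket_neg_right: "br x (- y) = - br x y"
  using bracket_add_right[of x "- y" y] bracket_zero_right
  by (simp add: eq_neg_iff_add_eq_0)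

lemma bracket_antisym: "br y x = - br x y"
proof -
  have "br (x + y) (x + y) = br x x + br y x + (br x y + br y y)"
    by (simp only: bracket_add_left bracket_add_right)
  then have "br y x + br x y = 0" by (simp add: bracket_self)
  then show ?thesis by (simp only: add_eq_0_iff2)
qed

lemma bracket_neg_left: "br (- x) y = - br x y"
  by (metis bracket_antisym bracket_neg_right)

lemma bracket_bracket_left: "br (br x y) z = br x (br y z) - br y (br x z)"
proof -
  have "br (br x y) z = - br z (br x y)" by (rule bracket_antisym)
  also have "\<dots> = br x (br y z) + br y (br z x)"
    using jacobi[of x y z] by (simp only: add_eq_0_iff2)
  also have "br y (br z x) = - br y (br x z)"
    by (simp add: bracket_antisym[of x z] bracket_neg_right)
  finally show ?thesis by simp
qed

lemma bracket_span_span_eq_0: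
  assumes "\<And>a b. a \<in> A \<Longrightarrow> b \<in> B \<Longrightarrow> br a b = 0" "a \<in> span A" "b \<in> span B"
  shows "br a b = 0"
proof -
  have kernel_left: "subspace {a. br a b = 0}" for b
    unfolding subspace_def by (auto simp: bracket_zero_left bracket_add_left bracket_scale_left)
  have kernel_right: "subspace {b. br a b = 0}" for a
    unfolding subspace_def by (auto simp: bracket_zero_right bracket_add_right bracket_scale_right)
  have "br a' b = 0" if "a' \<in> A" for a'
    using \<open>b \<in> span B\<close> kernel_right by (rule span_induct) (use assms(1) that in auto)
  with \<open>a \<in> span A\<close> kernel_left show ?thesis by (rule span_induct) auto
qed

lemma solvable_if_derived_abelian:
  assumes "\<And>x y z w. br (br x y) (br z w) = 0"
  shows "solvable_lie scale br"
proof -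
  let ?L' = "derived_series scale br 1"
  have "br a b = 0" if "a \<in> ?L'" "b \<in> ?L'" for a b
    using bracket_span_span_eq_0[OF _ that[simplified]] assms by blast
  then have "{br a b | a b. a \<in> ?L' \<and> b \<in> ?L'} \<subseteq> {0}" by blast
  then have "derived_series scale br 2 \<subseteq> span {0}"
    unfolding numeral_2_eq_2 derived_series.simps(2) One_nat_def[symmetric] by (rule span_mono)
  then have "derived_series scale br 2 = {0}"
    using span_zero[of "{br a b | a b. a \<in> ?L' \<and> b \<in> ?L'}"]
    by (auto simp: numeral_2_eq_2)
  then show ?thesis unfolding solvable_lie_def by blast
qed

end

locale lie_alg_breadth_le_1 =
  lie_alg scale br + finite_dimensional_vector_space scale B
  for scale :: "'k::field \<Rightarrow> 'v::ab_group_add \<Rightarrow> 'v" and br B +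
  assumes elem_breadth_le_1: "elem_breadth scale br x \<le> 1"
begin

lemma range_bracket_subset_span:
  assumes "u \<in> range (br x)" "u \<noteq> 0"
  shows "range (br x) \<subseteq> span {u}"
  using dim_le_1_subset_span_singleton assms elem_breadth_le_1[of x]
  unfolding elem_breadth_def by blast

lemma bracket_commutator_in_span: "br (br x y) z \<in> span {br x y}"
proof (cases "br x y = 0")
  case True
  then show ?thesis by (simp add: bracket_zero_left span_zero)
next
  case False
  have "br x y = br y (- x)" by (simp add: bracket_neg_right bracket_antisym[of x y])
  then have "range (br x) \<subseteq> span {br x y}" "range (br y) \<subseteq> span {br x y}"
    using range_bracket_subset_span False by (metis rangeI)+
  then show ?thesis
    unfolding bracket_bracket_left by (blast intro: span_diff)
qed

lemma commutators_commute: "br (br x y) (br z w) = 0"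
proof -
  define u v where "u = br x y" and "v = br z w"
  obtain a where a: "br u v = scale a u"
    using bracket_commutator_in_span[of x y] unfolding u_def span_singleton by blast
  obtain b where b: "br v u = scale b v"
    using bracket_commutator_in_span[of z w] unfolding v_def span_singleton by blast
  show ?thesis
  proof (cases "a = 0")
    case True
    with a show ?thesis unfolding u_def v_def by simp
  next
    case False
    have "u = scale (inverse a) (br u v)"
      using a False by simp
    also have "br u v = - scale b v"
      using b bracket_antisym[of u v] by simp
    finally have "u = scale (- (inverse a * b)) v"
      by (simp add: scale_scale)
    then show ?thesis
      unfolding u_def[symmetric] v_def[symmetric]
      by (simp add: bracket_neg_left bracket_scale_left bracket_self)
  qed
qed

lemma solvable: "solvable_lie scale br"
  using commutators_commute by (rule solvable_if_derived_abelian)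

end

theorem proposition2p4:
  fixes scale :: "'k::field \<Rightarrow> 'v::ab_group_add \<Rightarrow> 'v"
    and br :: "'v \<Rightarrow> 'v \<Rightarrow> 'v"
  assumes "(2::'k) \<noteq> 0"
    and "lie_algebra scale br"
    and "finite_dim scale"
    and "breadth scale br \<le> 1"
  shows "solvable_lie scale br"
proof -
  interpret lie_alg scale br by unfold_locales (rule assms(2))
  obtain B where "finite_dimensional_vector_space scale B"
    using finite_dim_basis_exists assms(3) by blast
  then interpret finite_dimensional_vector_space scale B .
  interpret lie_alg_breadth_le_1 scale br B
    by unfold_locales (use elem_breadth_le_breadth assms(4) le_trans in blast)
  show ?thesis by (rule solvable)
qed

end
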